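(* Let $n\geq 3$, $k\in\mathbb{Z}_n$ with $k\neq 0$ and $2k\not\equiv 0\pmod n$, and let $C$ be a perfect code in $\mathrm{GP}(n,k)$. Then $|C\cap U|=|C\cap V|=\frac{n}{4}$; in particular $n\equiv 0\pmod 4$.
   Context: For an integer $n\geq 3$ and a nonzero $k\in\mathbb{Z}_n$, the generalized Petersen graph $\mathrm{GP}(n,k)$ is the simple graph with vertex set $\{u_i,v_i\mid i\in\mathbb{Z}_n\}$ and edges $u_iu_{i+1}$, $u_iv_i$, $v_iv_{i+k}$ for all $i\in\mathbb{Z}_n$ (indices modulo $n$). Let $U=\{u_i\mid i\in\mathbb{Z}_n\}$ and $V=\{v_i\mid i\in\mathbb{Z}_n\}$. A perfect code in a graph $\Gamma$ is an independent set $C\subseteq V(\Gamma)$ such that every vertex not in $C$ is adjacent to exactly one vertex of $C$. *)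

theory Defs
  imports Main
begin

datatype gpv = U nat | V nat

definition gp_vertices :: "nat \<Rightarrow> gpv set" where
  "gp_vertices n = U ` {0..<n} \<union> V ` {0..<n}"

definition gp_U :: "nat \<Rightarrow> gpv set" where "gp_U n = U ` {0..<n}"
definition gp_V :: "nat \<Rightarrow> gpv set" where "gp_V n = V ` {0..<n}"

definition gp_arc :: "nat \<Rightarrow> nat \<Rightarrow> gpv \<Rightarrow> gpv \<Rightarrow> bool" where
  "gp_arc n k x y \<longleftrightarrow> (\<exists>i<n.
      (x = U i \<and> y = U ((i + 1) mod n)) \<or>
      (x = U i \<and> y = V i) \<or>
      (x = V i \<and> y = V ((i + k) mod n)))"

definition gp_adj :: "nat \<Rightarrow> nat \<Rightarrow> gpv \<Rightarrow> gpv \<Rightarrow> bool" where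
  "gp_adj n k x y \<longleftrightarrow> x \<noteq> y \<and> (gp_arc n k x y \<or> gp_arc n k y x)"

definition perfect_code :: "'a set \<Rightarrow> ('a \<Rightarrow> 'a \<Rightarrow> bool) \<Rightarrow> 'a set \<Rightarrow> bool" where
  "perfect_code Vs adj C \<longleftrightarrow> C \<subseteq> Vs \<and>
     (\<forall>x\<in>C. \<forall>y\<in>C. \<not> adj x y) \<and>
     (\<forall>x\<in>Vs - C. \<exists>!c. c \<in> C \<and> adj x c)"

end

theory Submission
  imports Defs
begin

text \<open>The closed neighbourhoods of the vertices of a perfect code partition the vertex set.
  In GP(n,k) the closed neighbourhood of a vertex of U meets U in three vertices and V in one,
  and symmetrically for a vertex of V, as long as the inner cycle has no double edges,
  i.e. 2k is not 0 modulo n. Counting U and V along this partition gives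
  n = 3 |C \<inter> U| + |C \<inter> V| = |C \<inter> U| + 3 |C \<inter> V|.\<close>

definition closed_nbhd :: "('a \<Rightarrow> 'a \<Rightarrow> bool) \<Rightarrow> 'a \<Rightarrow> 'a set" where
  "closed_nbhd adj x = insert x {y. adj x y}"

lemma perfect_code_closed_nbhds_cover:
  assumes "perfect_code Vs adj C" and "symp adj"
  shows "Vs \<subseteq> (\<Union>c\<in>C. closed_nbhd adj c)"
  using assms unfolding perfect_code_def closed_nbhd_def by (blast dest: sympD)

lemma perfect_code_closed_nbhds_disjoint:
  assumes "perfect_code Vs adj C" and "symp adj" and "c \<in> C" "d \<in> C" "c \<noteq> d"
  shows "closed_nbhd adj c \<inter> closed_nbhd adj d \<inter> Vs = {}"
  using assms unfolding perfect_code_def closed_nbhd_def by (blast dest: sympD)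

lemma perfect_code_card_eq_sum:
  assumes "perfect_code Vs adj C" and "symp adj" and "finite Vs" and "W \<subseteq> Vs"
  shows "card W = (\<Sum>c\<in>C. card (closed_nbhd adj c \<inter> W))"
proof -
  have "finite C" using assms(1,3) unfolding perfect_code_def by (blast intro: finite_subset)
  have "W = (\<Union>c\<in>C. closed_nbhd adj c \<inter> W)"
    using perfect_code_closed_nbhds_cover[OF assms(1,2)] assms(4) by blast
  also have "card \<dots> = (\<Sum>c\<in>C. card (closed_nbhd adj c \<inter> W))"
  proof (rule card_UN_disjoint[OF \<open>finite C\<close>])
    show "\<forall>c\<in>C. finite (closed_nbhd adj c \<inter> W)"
      using assms(3,4) by (blast intro: finite_subset)
    show "\<forall>c\<in>C. \<forall>d\<in>C. c \<noteq> d \<longrightarrow> closed_nbhd adj c \<inter> W \<inter> (closed_nbhd adj d \<inter> W) = {}"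
      using perfect_code_closed_nbhds_disjoint[OF assms(1,2)] assms(4) by blast
  qed
  finally show ?thesis .
qed

lemma perfect_code_card_eq_weighted:
  assumes "perfect_code Vs adj C" and "symp adj" and "finite Vs" and "W \<subseteq> Vs"
    and "\<And>c. c \<in> C \<Longrightarrow> card (closed_nbhd adj c \<inter> W) = (if c \<in> W then p else q)"
  shows "card W = p * card (C \<inter> W) + q * card (C - W)"
proof -
  have "finite C" using assms(1,3) unfolding perfect_code_def by (blast intro: finite_subset)
  have "card W = (\<Sum>c\<in>C. if c \<in> W then p else q)"
    using perfect_code_card_eq_sum[OF assms(1-4)] assms(5) by simp
  also have "\<dots> = p * card (C \<inter> W) + q * card (C - W)"
    using \<open>finite C\<close> by (simp add: sum.If_cases Int_def Diff_eq)
  finally show ?thesis .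
qed

lemma eq_mod_add_iff:
  fixes i j n s :: nat
  assumes "i < n" "j < n" "s \<le> n"
  shows "i = (j + s) mod n \<longleftrightarrow> j = (i + n - s) mod n"
proof
  assume "i = (j + s) mod n"
  then have "(i + n - s) mod n = ((j + s) mod n + (n - s)) mod n" using assms(3) by simp
  also have "\<dots> = (j + s + (n - s)) mod n" by (rule mod_add_left_eq)
  also have "\<dots> = (j + n) mod n" using assms(3) by simp
  finally show "j = (i + n - s) mod n" using assms(2) by simp
next
  assume "j = (i + n - s) mod n"
  then have "(j + s) mod n = ((i + n - s) mod n + s) mod n" by simp
  also have "\<dots> = (i + n) mod n" using assms(3) by (simp add: mod_add_left_eq)
  finally show "i = (j + s) mod n" using assms(1) by simp
qed

lemma mod_add_neq_self:
  fixes i n s :: nat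
  assumes "i < n" "s mod n \<noteq> 0"
  shows "(i + s) mod n \<noteq> i"
proof -
  define t where "t = s mod n"
  have t: "0 < t" "t < n" using assms unfolding t_def by auto
  have "(i + s) mod n = (i + t) mod n" unfolding t_def by (simp add: mod_add_right_eq)
  also have "\<dots> \<noteq> i"
  proof (cases "i + t < n")
    case False
    then have "(i + t) mod n = i + t - n" using assms(1) t by (simp add: le_mod_geq)
    then show ?thesis using False t by linarith
  qed (use t in simp)
  finally show ?thesis .
qed

definition circulant_closed_nbhd :: "nat \<Rightarrow> nat \<Rightarrow> nat \<Rightarrow> nat set" where
  "circulant_closed_nbhd n s i = {i, (i + s) mod n, (i + n - s) mod n}"

lemma card_circulant_closed_nbhd:
  fixes i n s :: nat
  assumes "i < n" "s < n" "(2 * s) mod n \<noteq> 0"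
  shows "card (circulant_closed_nbhd n s i) = 3"
proof -
  have "s mod n \<noteq> 0" using assms(2,3) by (metis mod_less mult_0_right)
  then have 1: "(i + s) mod n \<noteq> i" by (rule mod_add_neq_self[OF assms(1)])
  then have 2: "(i + n - s) mod n \<noteq> i" using eq_mod_add_iff[of i n i s] assms(1,2) by auto
  have 3: "(i + s) mod n \<noteq> (i + n - s) mod n"
  proof
    assume "(i + s) mod n = (i + n - s) mod n"
    then have "((i + s) mod n + s) mod n = ((i + n - s) mod n + s) mod n" by simp
    then have "(i + 2 * s) mod n = i" using assms(1,2) by (simp add: mod_add_left_eq mult_2 add.assoc)
    then show False using mod_add_neq_self[OF assms(1,3)] by simp
  qed
  show ?thesis using 1 2 3 by (simp add: circulant_closed_nbhd_def)
qed

lemma gp_arc_simps [simp]: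
  "gp_arc n k (U i) (U j) \<longleftrightarrow> i < n \<and> j = (i + 1) mod n"
  "gp_arc n k (U i) (V j) \<longleftrightarrow> i < n \<and> j = i"
  "\<not> gp_arc n k (V i) (U j)"
  "gp_arc n k (V i) (V j) \<longleftrightarrow> i < n \<and> j = (i + k) mod n"
  unfolding gp_arc_def by auto

lemma symp_gp_adj: "symp (gp_adj n k)"
  unfolding gp_adj_def by (auto intro: sympI)

lemma closed_nbhd_U_inter_gp_U:
  assumes "i < n"
  shows "closed_nbhd (gp_adj n k) (U i) \<inter> gp_U n = U ` circulant_closed_nbhd n 1 i"
proof -
  have "U j \<in> closed_nbhd (gp_adj n k) (U i) \<longleftrightarrow> j \<in> circulant_closed_nbhd n 1 i" if "j < n" for j
    using eq_mod_add_iff[of i n j 1] assms that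
    by (auto simp: closed_nbhd_def circulant_closed_nbhd_def gp_adj_def)
  then show ?thesis
    using assms by (auto simp: gp_U_def circulant_closed_nbhd_def)
qed

lemma closed_nbhd_V_inter_gp_V:
  assumes "i < n" "k \<le> n"
  shows "closed_nbhd (gp_adj n k) (V i) \<inter> gp_V n = V ` circulant_closed_nbhd n k i"
proof -
  have "V j \<in> closed_nbhd (gp_adj n k) (V i) \<longleftrightarrow> j \<in> circulant_closed_nbhd n k i" if "j < n" for j
    using eq_mod_add_iff[of i n j k] assms that
    by (auto simp: closed_nbhd_def circulant_closed_nbhd_def gp_adj_def)
  then show ?thesis
    using assms by (auto simp: gp_V_def circulant_closed_nbhd_def)
qed

lemma closed_nbhd_V_inter_gp_U: "i < n \<Longrightarrow> closed_nbhd (gp_adj n k) (V i) \<inter> gp_U n = {U i}"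
  by (auto simp: closed_nbhd_def gp_adj_def gp_U_def)

lemma closed_nbhd_U_inter_gp_V: "i < n \<Longrightarrow> closed_nbhd (gp_adj n k) (U i) \<inter> gp_V n = {V i}"
  by (auto simp: closed_nbhd_def gp_adj_def gp_V_def)

lemma gp_layer_mem_iff [simp]:
  "U i \<in> gp_U n \<longleftrightarrow> i < n" "V i \<notin> gp_U n"
  "V i \<in> gp_V n \<longleftrightarrow> i < n" "U i \<notin> gp_V n"
  by (auto simp: gp_U_def gp_V_def)

lemma card_closed_nbhd_inter_gp_U:
  assumes "3 \<le> n" and "c \<in> gp_vertices n"
  shows "card (closed_nbhd (gp_adj n k) c \<inter> gp_U n) = (if c \<in> gp_U n then 3 else 1)"
proof -
  obtain i where "i < n" and "c = U i \<or> c = V i" using assms(2) unfolding gp_vertices_def by auto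
  moreover have "card (circulant_closed_nbhd n 1 i) = 3"
    using card_circulant_closed_nbhd[of i n 1] \<open>i < n\<close> assms(1) by simp
  ultimately show ?thesis
    by (auto simp: closed_nbhd_U_inter_gp_U closed_nbhd_V_inter_gp_U card_image inj_on_def)
qed

lemma card_closed_nbhd_inter_gp_V:
  assumes "k < n" and "(2 * k) mod n \<noteq> 0" and "c \<in> gp_vertices n"
  shows "card (closed_nbhd (gp_adj n k) c \<inter> gp_V n) = (if c \<in> gp_V n then 3 else 1)"
proof -
  obtain i where "i < n" and "c = U i \<or> c = V i" using assms(3) unfolding gp_vertices_def by auto
  moreover have "card (circulant_closed_nbhd n k i) = 3"
    using card_circulant_closed_nbhd[of i n k] \<open>i < n\<close> assms(1,2) by simp
  ultimately show ?thesis
    using assms(1)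
    by (auto simp: closed_nbhd_V_inter_gp_V closed_nbhd_U_inter_gp_V card_image inj_on_def)
qed

theorem mainTheorem10:
  fixes n k :: nat and C :: "gpv set"
  assumes "n \<ge> 3" and "0 < k" and "k < n" and "(2 * k) mod n \<noteq> 0"
    and "perfect_code (gp_vertices n) (gp_adj n k) C"
  shows "4 * card (C \<inter> gp_U n) = n \<and> 4 * card (C \<inter> gp_V n) = n \<and> n mod 4 = 0"
proof -
  have C: "C \<subseteq> gp_vertices n" using assms(5) unfolding perfect_code_def by blast
  have finite: "finite (gp_vertices n)" by (simp add: gp_vertices_def)
  have "C - gp_U n = C \<inter> gp_V n" and "C - gp_V n = C \<inter> gp_U n"
    using C by (auto simp: gp_vertices_def gp_U_def gp_V_def)
  moreover have "card (gp_U n) = n" and "card (gp_V n) = n"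
    by (simp_all add: gp_U_def gp_V_def card_image inj_on_def)
  moreover have "card (gp_U n) = 3 * card (C \<inter> gp_U n) + 1 * card (C - gp_U n)"
    using C card_closed_nbhd_inter_gp_U[OF assms(1)]
    by (intro perfect_code_card_eq_weighted[OF assms(5) symp_gp_adj finite])
      (auto simp: gp_vertices_def gp_U_def)
  moreover have "card (gp_V n) = 3 * card (C \<inter> gp_V n) + 1 * card (C - gp_V n)"
    using C card_closed_nbhd_inter_gp_V[OF assms(3,4)]
    by (intro perfect_code_card_eq_weighted[OF assms(5) symp_gp_adj finite])
      (auto simp: gp_vertices_def gp_V_def)
  ultimately have "4 * card (C \<inter> gp_U n) = n" and "4 * card (C \<inter> gp_V n) = n" by auto
  then show ?thesis by presburger
qed

end
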